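(* Let $n\ge3$, $t_1<\dots<t_n$, and for $j=1,\dots,n-1$ let $\xi_j\in\mathbb{R}$ and $\varphi_j=\Phi_{(\xi_j,-\xi_j)}$. Let $H_1,\dots,H_n$ be the associated generalized hat functions and $\mathcal{H}_n$ their span. Then the matrix $(s_{i,j})$ with $s_{i,j}=\int_{t_1}^{t_n}H_i(t)H_j(t)\,dt$ is row diagonally dominant, and the orthogonal projection $P^{\mathcal{H}_n}$ (for the unweighted $L^2$ inner product on $[t_1,t_n]$) satisfies $\|P^{\mathcal{H}_n}\|_{op}\le4$.
   Context: $\Phi_{(\xi,-\xi)}(t)=\frac{\sinh(\xi t)}{\xi}$ for $\xi\ne0$ and $\Phi_{(0,0)}(t)=t$. Generalized hat functions: for $2\le j\le n-1$, $H_j(t)=\frac{\varphi_{j-1}(t-t_{j-1})}{\varphi_{j-1}(t_j-t_{j-1})}$ on $[t_{j-1},t_j]$, $H_j(t)=\frac{\varphi_j(t-t_{j+1})}{\varphi_j(t_j-t_{j+1})}$ on $[t_j,t_{j+1}]$, $0$ elsewhere; $H_1=\frac{\varphi_1(t-t_2)}{\varphi_1(t_1-t_2)}$ on $[t_1,t_2]$, $0$ elsewhere; $H_n=\frac{\varphi_{n-1}(t-t_{n-1})}{\varphi_{n-1}(t_n-t_{n-1})}$ on $[t_{n-1},t_n]$, $0$ elsewhere. $\|P^{\mathcal{H}_n}\|_{op}=\sup_{f\ne0}\|P^{\mathcal{H}_n}f\|_\infty/\|f\|_\infty$ on $C[t_1,t_n]$. Row diagonally dominant: there is $c\in(0,1)$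 with $|s_{j-1,j}|+|s_{j,j+1}|\le c|s_{j,j}|$ for all $j$, where $s_{0,1}=s_{n,n+1}=0$. *)

theory Defs
  imports "HOL-Analysis.Analysis"
begin

definition Phi :: "real \<Rightarrow> real \<Rightarrow> real" where
  "Phi \<xi> x = (if \<xi> = 0 then x else sinh (\<xi> * x) / \<xi>)"

definition hat :: "nat \<Rightarrow> (nat \<Rightarrow> real) \<Rightarrow> (nat \<Rightarrow> real) \<Rightarrow> nat \<Rightarrow> real \<Rightarrow> real" where
  "hat n tt \<xi> j x =
     (if 2 \<le> j \<and> tt (j - 1) \<le> x \<and> x \<le> tt j then
        Phi (\<xi> (j - 1)) (x - tt (j - 1)) / Phi (\<xi> (j - 1)) (tt j - tt (j - 1))
      else if j \<le> n - 1 \<and> tt j \<le> x \<and> x \<le> tt (j + 1) then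
        Phi (\<xi> j) (x - tt (j + 1)) / Phi (\<xi> j) (tt j - tt (j + 1))
      else 0)"

definition gram :: "nat \<Rightarrow> (nat \<Rightarrow> real) \<Rightarrow> (nat \<Rightarrow> real) \<Rightarrow> nat \<Rightarrow> nat \<Rightarrow> real" where
  "gram n tt \<xi> i j = integral {tt 1..tt n} (\<lambda>x. hat n tt \<xi> i x * hat n tt \<xi> j x)"

definition row_diag_dominant :: "nat \<Rightarrow> (nat \<Rightarrow> nat \<Rightarrow> real) \<Rightarrow> bool" where
  "row_diag_dominant n s \<longleftrightarrow> (\<exists>c. 0 < c \<and> c < 1 \<and>
     (\<forall>j\<in>{1..n}. (if j = 1 then 0 else \<bar>s (j - 1) j\<bar>) + (if j = n then 0 else \<bar>s j (j + 1)\<bar>)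
                    \<le> c * \<bar>s j j\<bar>))"

text \<open>Span of the hat functions (as functions on the reals; only values on [t_1,t_n] matter).\<close>
definition hat_span :: "nat \<Rightarrow> (nat \<Rightarrow> real) \<Rightarrow> (nat \<Rightarrow> real) \<Rightarrow> (real \<Rightarrow> real) set" where
  "hat_span n tt \<xi> = {g. \<exists>a::nat \<Rightarrow> real. \<forall>x. g x = (\<Sum>j=1..n. a j * hat n tt \<xi> j x)}"

definition is_orth_proj :: "nat \<Rightarrow> (nat \<Rightarrow> real) \<Rightarrow> (nat \<Rightarrow> real) \<Rightarrow> (real \<Rightarrow> real) \<Rightarrow> (real \<Rightarrow> real) \<Rightarrow> bool" where
  "is_orth_proj n tt \<xi> f g \<longleftrightarrow> g \<in> hat_span n tt \<xi> \<and>
     (\<forall>h\<in>hat_span n tt \<xi>. integral {tt 1..tt n} (\<lambda>x. (f x - g x) * h x) = 0)"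

end

theory Submission
  imports Defs "Jordan_Normal_Form.Determinant"
begin

text \<open>On each interval [t_k, t_{k+1}] the hats H_{k+1} and H_k are a ramp
  R(x) = Phi(x - t_k) / Phi(t_{k+1} - t_k) and its mirror image L; both are nonnegative and,
  Phi being superadditive on [0, \<infinity>), L + R \<le> 1. Hence the Gram matrix is tridiagonal, and
  an explicit computation of the integrals of R, R^2 and LR gives
  s_{jj} - |s_{j-1,j}| - |s_{j,j+1}| \<ge> (1/4) \<integral> H_j.
  If a solves the normal equations \<Sum>_l a_l s_{lj} = \<integral> f H_j, looking at the row j where
  |a_j| is maximal gives |a_j| \<integral> H_j / 4 \<le> |\<integral> f H_j| \<le> \<parallel>f\<parallel>_\<infinity> \<integral> H_j, so all |a_l| \<le> 4 \<parallel>f\<parallel>_\<infinity>;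
  for f = 0 this also shows that the Gram matrix is nonsingular. Finally |\<Sum>_l a_l H_l| \<le> max |a_l|,
  since at every point at most two hats are nonzero, both nonnegative with sum at most 1.\<close>

section \<open>Ramps on one interval\<close>

lemma Phi_abs: "Phi \<bar>\<xi>\<bar> x = Phi \<xi> x"
  by (cases "\<xi> < 0") (simp_all add: Phi_def)

lemma Phi_0 [simp]: "Phi \<xi> 0 = 0"
  by (simp add: Phi_def)

lemma Phi_minus: "Phi \<xi> (- x) = - Phi \<xi> x"
  by (simp add: Phi_def)

lemma Phi_pos_iff: "0 < Phi \<xi> x \<longleftrightarrow> 0 < x"
proof -
  have "0 < Phi \<bar>\<xi>\<bar> x \<longleftrightarrow> 0 < x"
    by (auto simp: Phi_def zero_less_divide_iff zero_less_mult_iff)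
  then show ?thesis by (simp add: Phi_abs)
qed

lemma Phi_eq_0_iff: "Phi \<xi> x = 0 \<longleftrightarrow> x = 0"
  using Phi_pos_iff[of \<xi> x] Phi_pos_iff[of \<xi> "-x"] by (auto simp: Phi_minus)

lemma continuous_on_Phi: "continuous_on S (Phi \<xi>)"
  unfolding Phi_def by (cases "\<xi> = 0") (auto intro!: continuous_intros)

lemma Phi_superadditive:
  assumes "0 \<le> p" "0 \<le> q"
  shows "Phi \<xi> p + Phi \<xi> q \<le> Phi \<xi> (p + q)"
proof -
  have pos: "Phi z p + Phi z q \<le> Phi z (p + q)" if "0 < z" for z
  proof -
    have "sinh (z*p) + sinh (z*q) \<le> sinh (z*p) * cosh (z*q) + cosh (z*p) * sinh (z*q)"
    proof (rule add_mono)
      show "sinh (z*p) \<le> sinh (z*p) * cosh (z*q)"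
        using mult_left_mono[OF cosh_real_ge_1, of "sinh (z*p)" "z*q"] assms that by simp
      show "sinh (z*q) \<le> cosh (z*p) * sinh (z*q)"
        using mult_right_mono[OF cosh_real_ge_1, of "sinh (z*q)" "z*p"] assms that by simp
    qed
    also have "\<dots> = sinh (z*(p+q))" by (simp add: sinh_add distrib_left)
    finally show ?thesis using that by (simp add: Phi_def add_divide_distrib[symmetric] divide_right_mono)
  qed
  have "Phi \<bar>\<xi>\<bar> p + Phi \<bar>\<xi>\<bar> q \<le> Phi \<bar>\<xi>\<bar> (p + q)"
  proof (cases "\<xi> = 0")
    case True
    then show ?thesis by (simp add: Phi_def)
  next
    case False
    then show ?thesis using pos[of "\<bar>\<xi>\<bar>"] by simp
  qed
  then show ?thesis
    by (simp add: Phi_abs)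
qed

definition ramp :: "real \<Rightarrow> real \<Rightarrow> real \<Rightarrow> real \<Rightarrow> real" where
  "ramp \<xi> a b x = Phi \<xi> (x - a) / Phi \<xi> (b - a)"

lemma ramp_abs: "ramp \<bar>\<xi>\<bar> = ramp \<xi>"
  by (simp add: fun_eq_iff ramp_def Phi_abs)

lemma ramp_start [simp]: "ramp \<xi> a b a = 0"
  by (simp add: ramp_def Phi_def)

lemma ramp_end: "a \<noteq> b \<Longrightarrow> ramp \<xi> a b b = 1"
  by (simp add: ramp_def Phi_eq_0_iff)

lemma ramp_swap: "ramp \<xi> b a x = Phi \<xi> (b - x) / Phi \<xi> (b - a)"
proof -
  have "Phi \<xi> (x - b) = - Phi \<xi> (b - x)" "Phi \<xi> (a - b) = - Phi \<xi> (b - a)"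
    using Phi_minus[of \<xi> "b - x"] Phi_minus[of \<xi> "b - a"] by simp_all
  then show ?thesis
    unfolding ramp_def by (metis minus_divide_divide)
qed

lemma ramp_reflect: "ramp \<xi> b a x = ramp \<xi> a b (a + b - x)"
  unfolding ramp_swap[of \<xi> b a] by (simp add: ramp_def)

lemma continuous_on_ramp: "continuous_on S (ramp \<xi> a b)"
proof -
  have "continuous_on S (\<lambda>x. Phi \<xi> (x - a))"
    by (rule continuous_on_compose2[OF continuous_on_Phi]) (auto intro!: continuous_intros)
  then show ?thesis
    unfolding ramp_def divide_inverse by (intro continuous_intros)
qed

lemma ramp_nonneg:
  assumes "a < b" "x \<in> {a..b}"
  shows "0 \<le> ramp \<xi> a b x"
proof -
  have "0 \<le> Phi \<xi> (x - a)"
    using assms Phi_pos_iff[of \<xi> "x - a"] by (cases "x = a") auto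
  moreover have "0 < Phi \<xi> (b - a)"
    using assms by (simp add: Phi_pos_iff)
  ultimately show ?thesis
    unfolding ramp_def by simp
qed

lemma ramp_swap_nonneg:
  assumes "a < b" "x \<in> {a..b}"
  shows "0 \<le> ramp \<xi> b a x"
  unfolding ramp_reflect[of \<xi> b a] using assms by (intro ramp_nonneg) auto

lemma ramp_swap_add_ramp_le_1:
  assumes "a < b" "x \<in> {a..b}"
  shows "ramp \<xi> b a x + ramp \<xi> a b x \<le> 1"
proof -
  have "Phi \<xi> (b - x) + Phi \<xi> (x - a) \<le> Phi \<xi> (b - a)"
    using Phi_superadditive[of "b - x" "x - a" \<xi>] assms by simp
  moreover have "0 < Phi \<xi> (b - a)"
    using assms by (simp add: Phi_pos_iff)
  ultimately show ?thesis
    unfolding ramp_swap[of \<xi> b a] by (simp add: ramp_def add_divide_distrib[symmetric])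
qed

lemma has_integral_antiderivative:
  fixes F f :: "real \<Rightarrow> real"
  assumes "a \<le> b" "\<And>x. (F has_real_derivative f x) (at x)" "F b - F a = I"
  shows "(f has_integral I) {a..b}"
proof -
  have "(f has_integral (F b - F a)) {a..b}"
    by (rule fundamental_theorem_of_calculus[OF assms(1)])
      (metis assms(2) has_field_derivative_at_within has_real_derivative_iff_has_vector_derivative)
  then show ?thesis using assms(3) by simp
qed

lemma has_integral_reflect_midpoint:
  fixes f :: "real \<Rightarrow> 'a::real_normed_vector"
  assumes "(f has_integral I) {a..b}"
  shows "((\<lambda>x. f (a + b - x)) has_integral I) {a..b}"
proof -
  have "((\<lambda>x. f ((-1) *\<^sub>R x + (a + b))) has_integral (1 / \<bar>-1\<bar> ^ DIM(real)) *\<^sub>R I)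
      ((\<lambda>x. (1 / (-1)) *\<^sub>R x + - ((1 / (-1)) *\<^sub>R (a + b))) ` cbox a b)"
    using assms by (intro has_integral_affinity) auto
  moreover have "(\<lambda>x. (1 / (-1)) *\<^sub>R x + - ((1 / (-1)) *\<^sub>R (a + b))) ` cbox a b = {a..b}"
    by (auto simp: image_iff intro!: bexI[where x="a + b - _"])
  ultimately show ?thesis by simp
qed

lemma integral_reflect_midpoint:
  fixes f :: "real \<Rightarrow> 'a::real_normed_vector"
  shows "integral {a..b} (\<lambda>x. f (a + b - x)) = integral {a..b} f"
proof (cases "f integrable_on {a..b}")
  case True
  then show ?thesis
    by (intro integral_unique has_integral_reflect_midpoint) (simp add: has_integral_integral)
next
  case False
  then have "\<not> (\<lambda>x. f (a + b - x)) integrable_on {a..b}"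
    using has_integral_reflect_midpoint[of "\<lambda>x. f (a + b - x)" _ a b] by (auto simp: integrable_on_def)
  with False show ?thesis by (simp add: not_integrable_integral)
qed

lemma has_integral_along_nodes:
  fixes t :: "nat \<Rightarrow> real" and f :: "real \<Rightarrow> 'a::banach"
  assumes "1 \<le> m"
    and "\<And>k. 1 \<le> k \<Longrightarrow> k < m \<Longrightarrow> t k \<le> t (Suc k)"
    and "\<And>k. 1 \<le> k \<Longrightarrow> k < m \<Longrightarrow> (f has_integral I k) {t k..t (Suc k)}"
  shows "(f has_integral (\<Sum>k=1..<m. I k)) {t 1..t m}"
proof -
  have "t 1 \<le> t m \<and> (f has_integral (\<Sum>k=1..<m. I k)) {t 1..t m}"
    using assms
  proof (induction m rule: dec_induct)
    case base
    then show ?case by auto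
  next
    case (step m)
    have IH: "t 1 \<le> t m" "(f has_integral (\<Sum>k=1..<m. I k)) {t 1..t m}"
      using step by simp_all
    have last: "t m \<le> t (Suc m)" "(f has_integral I m) {t m..t (Suc m)}"
      using step.hyps step.prems by simp_all
    have "(\<Sum>k=1..<Suc m. I k) = (\<Sum>k=1..<m. I k) + I m"
      using step.hyps(1) by simp
    with has_integral_combine[OF IH(1) last(1) IH(2) last(2)] IH(1) last(1) show ?case
      by simp
  qed
  then show ?thesis ..
qed

lemma ramp_integrals_linear:
  assumes "a < b"
  shows "(ramp 0 a b has_integral (b - a) / 2) {a..b}"
    and "((\<lambda>x. ramp 0 a b x * ramp 0 a b x) has_integral (b - a) / 3) {a..b}"
    and "((\<lambda>x. ramp 0 b a x * ramp 0 a b x) has_integral (b - a) / 6) {a..b}"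
proof -
  define h where "h = b - a"
  have h: "0 < h" using assms by (simp add: h_def)
  have b: "b - a = h" by (simp add: h_def)
  have up: "ramp 0 a b x = (x - a) / h" for x
    by (simp add: ramp_def Phi_def h_def)
  have down: "ramp 0 b a x = (a + h - x) / h" for x
    unfolding ramp_swap[of 0 b a] by (simp add: Phi_def h_def)
  show "(ramp 0 a b has_integral (b - a) / 2) {a..b}"
    by (rule has_integral_antiderivative[where F = "\<lambda>x. (x - a)^2 / (2 * h)"])
      (use h assms in \<open>auto simp: up b field_simps power2_eq_square intro!: derivative_eq_intros\<close>)
  show "((\<lambda>x. ramp 0 a b x * ramp 0 a b x) has_integral (b - a) / 3) {a..b}"
    by (rule has_integral_antiderivative[where F = "\<lambda>x. (x - a)^3 / (3 * h^2)"])
      (use h assms in \<open>auto simp: up b field_simps power2_eq_square power3_eq_cube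
        intro!: derivative_eq_intros\<close>)
  show "((\<lambda>x. ramp 0 b a x * ramp 0 a b x) has_integral (b - a) / 6) {a..b}"
    by (rule has_integral_antiderivative[where F = "\<lambda>x. ((x - a)^2 * h / 2 - (x - a)^3 / 3) / h^2"])
      (use h assms in \<open>auto simp: up down b field_simps power2_eq_square power3_eq_cube
        intro!: derivative_eq_intros\<close>)
qed

lemma ramp_integrals_sinh:
  assumes "a < b" "0 < \<xi>"
  defines "k \<equiv> \<xi> * (b - a)"
  shows "(ramp \<xi> a b has_integral (cosh k - 1) / (\<xi> * sinh k)) {a..b}"
    and "((\<lambda>x. ramp \<xi> a b x * ramp \<xi> a b x)
          has_integral (sinh k * cosh k - k) / (2 * \<xi> * (sinh k)\<^sup>2)) {a..b}"
    and "((\<lambda>x. ramp \<xi> b a x * ramp \<xi> a b x)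
          has_integral (k * cosh k - sinh k) / (2 * \<xi> * (sinh k)\<^sup>2)) {a..b}"
proof -
  have S: "0 < sinh k" using assms by (simp add: k_def)
  have ab: "a \<le> b" "\<xi> * (b - a) = k" "\<xi> * (a - b) = - k" using assms by (simp_all add: k_def algebra_simps)
  have up: "ramp \<xi> a b x = sinh (\<xi> * (x - a)) / sinh k" for x
    using assms by (simp add: ramp_def Phi_def k_def)
  have down: "ramp \<xi> b a x = sinh (\<xi> * (b - x)) / sinh k" for x
    unfolding ramp_swap[of \<xi> b a] using assms by (simp add: Phi_def k_def)
  show "(ramp \<xi> a b has_integral (cosh k - 1) / (\<xi> * sinh k)) {a..b}"
    by (rule has_integral_antiderivative[where F = "\<lambda>x. cosh (\<xi> * (x - a)) / (\<xi> * sinh k)"])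
      (use ab assms S in \<open>auto simp: up diff_divide_distrib intro!: derivative_eq_intros\<close>)
  show "((\<lambda>x. ramp \<xi> a b x * ramp \<xi> a b x)
          has_integral (sinh k * cosh k - k) / (2 * \<xi> * (sinh k)\<^sup>2)) {a..b}"
  proof (rule has_integral_antiderivative[where
        F = "\<lambda>x. (sinh (\<xi> * (x - a)) * cosh (\<xi> * (x - a)) - \<xi> * (x - a)) / (2 * \<xi> * (sinh k)\<^sup>2)"])
    fix x
    have "cosh (\<xi> * (x - a)) * cosh (\<xi> * (x - a)) = 1 + sinh (\<xi> * (x - a)) * sinh (\<xi> * (x - a))"
      using cosh_square_eq[of "\<xi> * (x - a)"] by (simp add: power2_eq_square)
    then show "((\<lambda>x. (sinh (\<xi> * (x - a)) * cosh (\<xi> * (x - a)) - \<xi> * (x - a)) / (2 * \<xi> * (sinh k)\<^sup>2))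
        has_real_derivative ramp \<xi> a b x * ramp \<xi> a b x) (at x)"
      using assms S by (auto simp: up field_simps power2_eq_square intro!: derivative_eq_intros)
  qed (use ab assms in simp_all)
  show "((\<lambda>x. ramp \<xi> b a x * ramp \<xi> a b x)
          has_integral (k * cosh k - sinh k) / (2 * \<xi> * (sinh k)\<^sup>2)) {a..b}"
  proof (rule has_integral_antiderivative[where
        F = "\<lambda>x. ((x - a) * cosh k + sinh (\<xi> * (a + b - 2 * x)) / (2 * \<xi>)) / (2 * (sinh k)\<^sup>2)"])
    fix x
    have "k = \<xi> * (b - x) + \<xi> * (x - a)" "\<xi> * (a + b - 2 * x) = \<xi> * (b - x) - \<xi> * (x - a)"
      by (simp_all add: k_def algebra_simps)
    then have "cosh k - cosh (\<xi> * (a + b - 2 * x)) = 2 * sinh (\<xi> * (b - x)) * sinh (\<xi> * (x - a))"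
      by (simp add: cosh_add cosh_diff)
    then show "((\<lambda>x. ((x - a) * cosh k + sinh (\<xi> * (a + b - 2 * x)) / (2 * \<xi>)) / (2 * (sinh k)\<^sup>2))
        has_real_derivative ramp \<xi> b a x * ramp \<xi> a b x) (at x)"
      using assms S by (auto simp: up down field_simps power2_eq_square intro!: derivative_eq_intros)
  next
    have e: "\<xi> * (a + b - 2 * b) = - k" "\<xi> * (a + b - 2 * a) = k" "b - a = k / \<xi>"
      using assms(2) by (simp_all add: k_def field_simps)
    show "((b - a) * cosh k + sinh (\<xi> * (a + b - 2 * b)) / (2 * \<xi>)) / (2 * (sinh k)\<^sup>2)
        - ((a - a) * cosh k + sinh (\<xi> * (a + b - 2 * a)) / (2 * \<xi>)) / (2 * (sinh k)\<^sup>2)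
        = (k * cosh k - sinh k) / (2 * \<xi> * (sinh k)\<^sup>2)"
      unfolding e using assms(2) S by (simp add: field_simps)
  qed (use ab in simp)
qed

text \<open>With k = \<xi> (b - a), this is the inequality
  \<integral> R \<le> 4 (\<integral> R^2 - \<integral> L R) after inserting the closed forms of
  the integrals; it is proved with the half argument m = k / 2.\<close>

lemma cosh_sub_1_mult_sinh_le:
  fixes k :: real
  assumes "0 < k"
  shows "(cosh k - 1) * sinh k \<le> 2 * (sinh k - k) * (cosh k + 1)"
proof -
  define m where "m = k / 2"
  have m: "0 \<le> m" "k = 2 * m" using assms by (simp_all add: m_def)
  have "m \<le> sinh m"
    using real_le_x_sinh[OF m(1)] by (simp add: sinh_field_def exp_minus)
  moreover have "2 * cosh m \<le> cosh m ^ 2 + 1"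
    using zero_le_power2[of "cosh m - 1"] by (simp add: power2_eq_square algebra_simps)
  ultimately have "2 * m * cosh m \<le> sinh m * (cosh m ^ 2 + 1)"
    using m(1) mult_mono[of m "sinh m" "2 * cosh m" "cosh m ^ 2 + 1"] by (simp add: mult_ac)
  moreover have "2 * (sinh k - k) * (cosh k + 1) - (cosh k - 1) * sinh k
      = 4 * cosh m * (sinh m * (cosh m ^ 2 + 1) - 2 * m * cosh m)"
  proof -
    have S: "sinh k = 2 * sinh m * cosh m" and C: "cosh k = 2 * cosh m ^ 2 - 1"
      by (simp_all add: m(2) sinh_double cosh_double_cosh)
    show ?thesis
      unfolding S C using sinh_square_eq[of m]
      by (simp add: m(2) algebra_simps power2_eq_square power3_eq_cube)
  qed
  ultimately show ?thesis
    by (smt (verit) cosh_real_pos mult_nonneg_nonneg)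
qed

lemma ramp_integral_bounds:
  assumes "a < b"
  shows "0 < integral {a..b} (ramp \<xi> a b)"
    and "integral {a..b} (ramp \<xi> a b) \<le> 4 * (integral {a..b} (\<lambda>x. ramp \<xi> a b x * ramp \<xi> a b x)
           - integral {a..b} (\<lambda>x. ramp \<xi> b a x * ramp \<xi> a b x))"
proof -
  have "0 < integral {a..b} (ramp z a b)
      \<and> integral {a..b} (ramp z a b) \<le> 4 * (integral {a..b} (\<lambda>x. ramp z a b x * ramp z a b x)
          - integral {a..b} (\<lambda>x. ramp z b a x * ramp z a b x))" if "0 \<le> z" for z
  proof (cases "z = 0")
    case True
    then show ?thesis
      using ramp_integrals_linear[OF assms] assms by (simp add: integral_unique)
  next
    case False
    with that have z: "0 < z" by simp
    define k where "k = z * (b - a)"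
    have k: "0 < k" "0 < sinh k" "1 < cosh k"
      using assms z cosh_real_nonneg_less_iff[of 0 k] by (simp_all add: k_def)
    note integrals = ramp_integrals_sinh[OF assms z, folded k_def, THEN integral_unique]
    have "(cosh k - 1) / (z * sinh k) = (cosh k - 1) * sinh k / (z * (sinh k)\<^sup>2)"
      using k by (simp add: power2_eq_square)
    also have "\<dots> \<le> 2 * (sinh k - k) * (cosh k + 1) / (z * (sinh k)\<^sup>2)"
      using cosh_sub_1_mult_sinh_le[OF k(1)] z k by (simp add: divide_right_mono)
    also have "\<dots> = 4 * ((sinh k * cosh k - k) / (2 * z * (sinh k)\<^sup>2)
        - (k * cosh k - sinh k) / (2 * z * (sinh k)\<^sup>2))"
      using z k by (simp add: field_simps)
    finally show ?thesis
      using z k by (simp add: integrals)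
  qed
  from this[of "\<bar>\<xi>\<bar>"] show "0 < integral {a..b} (ramp \<xi> a b)"
    and "integral {a..b} (ramp \<xi> a b) \<le> 4 * (integral {a..b} (\<lambda>x. ramp \<xi> a b x * ramp \<xi> a b x)
           - integral {a..b} (\<lambda>x. ramp \<xi> b a x * ramp \<xi> a b x))"
    by (simp_all add: ramp_abs)
qed

section \<open>Diagonally dominant linear systems\<close>

lemma diag_dominant_coeff_bound:
  fixes s :: "'i \<Rightarrow> 'i \<Rightarrow> real" and a D :: "'i \<Rightarrow> real"
  assumes "finite I" "0 \<le> c"
    and margin: "\<And>j. j \<in> I \<Longrightarrow> 0 < D j \<and> D j \<le> c * (\<bar>s j j\<bar> - (\<Sum>l\<in>I - {j}. \<bar>s l j\<bar>))"
    and rows: "\<And>j. j \<in> I \<Longrightarrow> \<bar>\<Sum>l\<in>I. a l * s l j\<bar> \<le> M * D j"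
    and "i \<in> I"
  shows "\<bar>a i\<bar> \<le> c * M"
proof -
  have "Max ((\<lambda>l. \<bar>a l\<bar>) ` I) \<in> (\<lambda>l. \<bar>a l\<bar>) ` I"
    using assms(1,5) by (intro Max_in) auto
  then obtain j where j: "j \<in> I" and "\<bar>a j\<bar> = Max ((\<lambda>l. \<bar>a l\<bar>) ` I)"
    by auto
  then have max: "\<bar>a l\<bar> \<le> \<bar>a j\<bar>" if "l \<in> I" for l
    using assms(1) that by simp
  define off where "off = (\<Sum>l\<in>I - {j}. \<bar>s l j\<bar>)"
  have "\<bar>\<Sum>l\<in>I - {j}. a l * s l j\<bar> \<le> (\<Sum>l\<in>I - {j}. \<bar>a l\<bar> * \<bar>s l j\<bar>)"
    by (metis (no_types, lifting) abs_mult sum.cong sum_abs)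
  also have "\<dots> \<le> \<bar>a j\<bar> * off"
    unfolding off_def sum_distrib_left using max by (intro sum_mono mult_right_mono) auto
  finally have "\<bar>a j\<bar> * (\<bar>s j j\<bar> - off) \<le> \<bar>\<Sum>l\<in>I. a l * s l j\<bar>"
    using sum.remove[OF assms(1) j, of "\<lambda>l. a l * s l j"] by (simp add: abs_mult right_diff_distrib)
  have "\<bar>a j\<bar> * D j \<le> \<bar>a j\<bar> * (c * (\<bar>s j j\<bar> - off))"
    using margin[OF j] unfolding off_def by (intro mult_left_mono) auto
  also have "\<dots> = c * (\<bar>a j\<bar> * (\<bar>s j j\<bar> - off))"
    by simp
  also have "\<dots> \<le> c * (M * D j)"
    using \<open>\<bar>a j\<bar> * (\<bar>s j j\<bar> - off) \<le> _\<close> rows[OF j] assms(2)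
    by (intro mult_left_mono) auto
  finally have "\<bar>a j\<bar> * D j \<le> c * M * D j"
    by simp
  then have "\<bar>a j\<bar> \<le> c * M"
    using margin[OF j] by (simp add: mult_le_cancel_right)
  then show ?thesis
    using max[OF assms(5)] by linarith
qed

lemma square_system_solvable:
  fixes s :: "nat \<Rightarrow> nat \<Rightarrow> 'a::field"
  assumes "\<And>a. \<forall>j\<in>{1..n}. (\<Sum>l=1..n. a l * s l j) = 0 \<Longrightarrow> \<forall>l\<in>{1..n}. a l = 0"
  shows "\<exists>a. \<forall>j\<in>{1..n}. (\<Sum>l=1..n. a l * s l j) = b j"
proof -
  define A where "A = Matrix.mat n n (\<lambda>(i, l). s (l + 1) (i + 1))"
  define coeffs :: "'a vec \<Rightarrow> nat \<Rightarrow> 'a" where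
    "coeffs v l = (if 1 \<le> l \<and> l \<le> n then v $ (l - 1) else 0)" for v l
  have A: "A \<in> carrier_mat n n" unfolding A_def by simp
  have row: "(A *\<^sub>v v) $ (j - 1) = (\<Sum>l=1..n. coeffs v l * s l j)"
    if "v \<in> carrier_vec n" "j \<in> {1..n}" for v j
  proof -
    have "(A *\<^sub>v v) $ (j - 1) = (\<Sum>i<n. s (i + 1) j * v $ i)"
      using that by (auto simp: A_def scalar_prod_def atLeast0LessThan)
    also have "\<dots> = (\<Sum>l=1..n. coeffs v l * s l j)"
      by (simp add: sum.atLeast1_atMost_eq coeffs_def mult.commute)
    finally show ?thesis .
  qed
  have "det A \<noteq> 0"
  proof
    assume "det A = 0"
    then obtain v where v: "v \<in> carrier_vec n" "v \<noteq> 0\<^sub>v n" "A *\<^sub>v v = 0\<^sub>v n"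
      using det_0_iff_vec_prod_zero_field[OF A] by auto
    have "\<forall>j\<in>{1..n}. (\<Sum>l=1..n. coeffs v l * s l j) = 0"
    proof
      fix j assume j: "j \<in> {1..n}"
      then have "j - 1 < n" by auto
      with v(3) row[OF v(1) j] show "(\<Sum>l=1..n. coeffs v l * s l j) = 0" by simp
    qed
    then have "\<forall>l\<in>{1..n}. coeffs v l = 0" by (rule assms)
    then have "v = 0\<^sub>v n"
      using v(1) by (intro eq_vecI) (force simp: coeffs_def)+
    with v(2) show False ..
  qed
  then obtain B where B: "B \<in> carrier_mat n n" "A * B = 1\<^sub>m n"
    using det_non_zero_imp_unit[OF A \<open>det A \<noteq> 0\<close>, of "()"] unfolding Units_def
    by (auto simp: ring_mat_simps)
  define w where "w = Matrix.vec n (\<lambda>i. b (i + 1))"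
  define v where "v = B *\<^sub>v w"
  have v: "v \<in> carrier_vec n" using B(1) by (simp add: v_def w_def)
  have "A *\<^sub>v v = w"
    using assoc_mult_mat_vec[OF A B(1), of w] B(2) by (simp add: v_def w_def)
  have "(\<Sum>l=1..n. coeffs v l * s l j) = b j" if j: "j \<in> {1..n}" for j
  proof -
    have "j - 1 < n" "Suc (j - 1) = j" using j by auto
    with row[OF v j] \<open>A *\<^sub>v v = w\<close> show ?thesis by (simp add: w_def)
  qed
  then show ?thesis by blast
qed

lemma row_diag_dominantI:
  fixes s :: "nat \<Rightarrow> nat \<Rightarrow> real"
  assumes "\<And>j. j \<in> {1..n} \<Longrightarrow>
    (if j = 1 then 0 else \<bar>s (j - 1) j\<bar>) + (if j = n then 0 else \<bar>s j (j + 1)\<bar>) < \<bar>s j j\<bar>"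
  shows "row_diag_dominant n s"
proof -
  define off where
    "off j = (if j = 1 then 0 else \<bar>s (j - 1) j\<bar>) + (if j = n then 0 else \<bar>s j (j + 1)\<bar>)" for j
  define c where "c = Max (insert (1/2) ((\<lambda>j. off j / \<bar>s j j\<bar>) ` {1..n}))"
  have ratio: "off j / \<bar>s j j\<bar> < 1" "0 < \<bar>s j j\<bar>" if "j \<in> {1..n}" for j
    using assms[OF that] by (auto simp: off_def split: if_splits)
  have "c < 1"
    unfolding c_def using ratio by (subst Max_less_iff) auto
  moreover have "1/2 \<le> c"
    unfolding c_def by (intro Max_ge) auto
  moreover have "off j \<le> c * \<bar>s j j\<bar>" if "j \<in> {1..n}" for j
  proof -
    have "off j / \<bar>s j j\<bar> \<le> c"
      unfolding c_def using that by (intro Max_ge) auto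
    then show ?thesis using ratio(2)[OF that] by (simp add: divide_le_eq)
  qed
  ultimately show ?thesis
    unfolding row_diag_dominant_def off_def by (intro exI[of _ c]) auto
qed

section \<open>Hat functions and their Gram matrix\<close>

lemma hat_eq_ramps:
  "hat n tt \<xi> j x =
     (if 2 \<le> j \<and> tt (j - 1) \<le> x \<and> x \<le> tt j then ramp (\<xi> (j - 1)) (tt (j - 1)) (tt j) x
      else if j \<le> n - 1 \<and> tt j \<le> x \<and> x \<le> tt (j + 1) then ramp (\<xi> j) (tt (j + 1)) (tt j) x
      else 0)"
  by (simp add: hat_def ramp_def)

lemma hat_eq_sum_indicator:
  assumes "j \<in> {1..n}"
  shows "hat n tt \<xi> j x = (\<Sum>i=1..n. (if i = j then 1 else 0) * hat n tt \<xi> i x)"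
proof -
  have "(\<Sum>i=1..n. (if i = j then 1 else 0) * hat n tt \<xi> i x)
      = (\<Sum>i=1..n. if i = j then hat n tt \<xi> j x else 0)"
    by (rule sum.cong) auto
  then show ?thesis using assms by simp
qed

lemma hat_in_hat_span:
  assumes "j \<in> {1..n}"
  shows "hat n tt \<xi> j \<in> hat_span n tt \<xi>"
  unfolding hat_span_def
  by (intro CollectI exI[of _ "\<lambda>i. if i = j then 1 else 0"] allI hat_eq_sum_indicator[OF assms])

lemma gram_sym: "gram n tt \<xi> i j = gram n tt \<xi> j i"
  by (simp add: gram_def mult.commute)

locale hat_basis =
  fixes n :: nat and tt \<xi> :: "nat \<Rightarrow> real"
  assumes two_le_n: "2 \<le> n"
    and nodes_increasing: "\<And>i. 1 \<le> i \<Longrightarrow> i < n \<Longrightarrow> tt i < tt (i + 1)"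
begin

lemma nodes_less: "1 \<le> p \<Longrightarrow> p < q \<Longrightarrow> q \<le> n \<Longrightarrow> tt p < tt q"
proof (induction q rule: less_induct)
  case (less q)
  show ?case
  proof (cases "p = q - 1")
    case True
    then show ?thesis using nodes_increasing[of p] less.prems by simp
  next
    case False
    then have "tt p < tt (q - 1)" using less by simp
    also have "tt (q - 1) < tt q" using nodes_increasing[of "q - 1"] less.prems False by simp
    finally show ?thesis .
  qed
qed

lemma nodes_le: "1 \<le> p \<Longrightarrow> p \<le> q \<Longrightarrow> q \<le> n \<Longrightarrow> tt p \<le> tt q"
  using nodes_less[of p q] by (cases "p = q") auto

lemma piece_subset: "1 \<le> k \<Longrightarrow> k < n \<Longrightarrow> {tt k..tt (Suc k)} \<subseteq> {tt 1..tt n}"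
  using nodes_le[of 1 k] nodes_le[of "Suc k" n] by auto

lemma nodes_cover:
  assumes "x \<in> {tt 1..tt n}"
  obtains k where "1 \<le> k" "k < n" "x \<in> {tt k..tt (Suc k)}"
proof -
  define K where "K = {k \<in> {1..<n}. tt k \<le> x}"
  have "1 \<in> K" using assms two_le_n by (simp add: K_def)
  then have "Max K \<in> K" by (intro Max_in) (auto simp: K_def)
  moreover have "x \<le> tt (Max K + 1)"
  proof (cases "Max K + 1 = n")
    case False
    have "Max K + 1 \<notin> K"
    proof
      assume "Max K + 1 \<in> K"
      then have "Max K + 1 \<le> Max K" by (intro Max_ge) (auto simp: K_def)
      then show False by simp
    qed
    moreover have "Max K + 1 \<in> {1..<n}" using \<open>Max K \<in> K\<close> False by (auto simp: K_def)
    ultimately show ?thesis by (simp add: K_def)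
  qed (use assms in auto)
  ultimately show ?thesis using that by (auto simp: K_def)
qed

definition hat_fall :: "nat \<Rightarrow> real \<Rightarrow> real" where
  "hat_fall k = ramp (\<xi> k) (tt (Suc k)) (tt k)"

definition hat_rise :: "nat \<Rightarrow> real \<Rightarrow> real" where
  "hat_rise k = ramp (\<xi> k) (tt k) (tt (Suc k))"

definition hat_piece :: "nat \<Rightarrow> nat \<Rightarrow> real \<Rightarrow> real" where
  "hat_piece j k x = (if j = k then hat_fall k x else 0) + (if j = Suc k then hat_rise k x else 0)"

lemma hat_eq_hat_piece:
  assumes k: "1 \<le> k" "k < n" and x: "x \<in> {tt k..tt (Suc k)}" and j: "j \<in> {1..n}"
  shows "hat n tt \<xi> j x = hat_piece j k x"
proof -
  have tk: "tt k < tt (Suc k)" using nodes_increasing k by simp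
  consider "j = k" | "j = Suc k" | "j < k" | "Suc k < j" by linarith
  then show ?thesis
  proof cases
    case 1
    \<comment> \<open>at x = tt k both branches of the definition of hat apply; both give the value 1\<close>
    have "tt (k - 1) < tt k" if "2 \<le> k" using nodes_less[of "k - 1" k] that k by simp
    then show ?thesis
      using 1 x tk k by (auto simp: hat_eq_ramps hat_piece_def hat_fall_def ramp_end)
  next
    case 2
    then show ?thesis
      using x k by (simp add: hat_eq_ramps hat_piece_def hat_rise_def)
  next
    case 3
    have "tt j < tt k" using nodes_less[of j k] 3 j k by simp
    moreover have "x \<le> tt (j + 1) \<Longrightarrow> x = tt (j + 1)"
      using nodes_le[of "Suc j" k] 3 k x by force
    ultimately show ?thesis
      using 3 x by (auto simp: hat_eq_ramps hat_piece_def)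
  next
    case 4
    have "tt (Suc k) < tt j" using nodes_less[of "Suc k" j] 4 j by simp
    moreover have "tt (j - 1) \<le> x \<Longrightarrow> x = tt (j - 1)"
      using nodes_le[of "Suc k" "j - 1"] 4 j x by force
    ultimately show ?thesis
      using 4 x by (auto simp: hat_eq_ramps hat_piece_def)
  qed
qed

lemma continuous_on_hat_piece: "continuous_on S (hat_piece j k)"
  by (cases "j = k"; cases "j = Suc k")
    (simp_all add: hat_piece_def[abs_def] hat_fall_def hat_rise_def continuous_on_ramp)

lemma hat_piece_nonneg:
  assumes "1 \<le> k" "k < n" "x \<in> {tt k..tt (Suc k)}"
  shows "0 \<le> hat_piece j k x"
  using ramp_nonneg[of "tt k" "tt (Suc k)" x] ramp_swap_nonneg[of "tt k" "tt (Suc k)" x]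
    nodes_increasing[of k] assms
  by (simp add: hat_piece_def hat_fall_def hat_rise_def)

lemma hat_nonneg:
  assumes "x \<in> {tt 1..tt n}" "j \<in> {1..n}"
  shows "0 \<le> hat n tt \<xi> j x"
proof -
  obtain k where "1 \<le> k" "k < n" "x \<in> {tt k..tt (Suc k)}"
    using nodes_cover[OF assms(1)] .
  then show ?thesis
    using hat_eq_hat_piece hat_piece_nonneg assms(2) by simp
qed

lemma has_integral_by_pieces:
  fixes g :: "real \<Rightarrow> real"
  assumes "\<And>k x. 1 \<le> k \<Longrightarrow> k < n \<Longrightarrow> x \<in> {tt k..tt (Suc k)} \<Longrightarrow> g x = F k x"
    and "\<And>k. 1 \<le> k \<Longrightarrow> k < n \<Longrightarrow> continuous_on {tt k..tt (Suc k)} (F k)"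
  shows "(g has_integral (\<Sum>k=1..<n. integral {tt k..tt (Suc k)} (F k))) {tt 1..tt n}"
proof (rule has_integral_along_nodes[where t = tt])
  fix k assume k: "1 \<le> k" "k < n"
  then have "(F k has_integral integral {tt k..tt (Suc k)} (F k)) {tt k..tt (Suc k)}"
    using assms(2) integrable_continuous_interval by (blast intro: integrable_integral)
  then show "(g has_integral integral {tt k..tt (Suc k)} (F k)) {tt k..tt (Suc k)}"
    by (rule has_integral_eq[rotated]) (use assms(1) k in simp)
next
  show "1 \<le> n" using two_le_n by simp
  show "tt k \<le> tt (Suc k)" if "1 \<le> k" "k < n" for k
    using nodes_increasing[OF that] by simp
qed

definition piece_mass :: "nat \<Rightarrow> real" where
  "piece_mass k = integral {tt k..tt (Suc k)} (hat_rise k)"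

definition piece_square :: "nat \<Rightarrow> real" where
  "piece_square k = integral {tt k..tt (Suc k)} (\<lambda>x. hat_rise k x * hat_rise k x)"

definition piece_overlap :: "nat \<Rightarrow> real" where
  "piece_overlap k = integral {tt k..tt (Suc k)} (\<lambda>x. hat_fall k x * hat_rise k x)"

lemma hat_fall_reflect: "hat_fall k = (\<lambda>x. hat_rise k (tt k + tt (Suc k) - x))"
  unfolding hat_fall_def hat_rise_def by (rule ext) (rule ramp_reflect)

lemma integral_hat_fall: "integral {tt k..tt (Suc k)} (hat_fall k) = piece_mass k"
  using integral_reflect_midpoint[of "tt k" "tt (Suc k)" "hat_rise k"]
  by (simp add: hat_fall_reflect piece_mass_def)

lemma integral_hat_fall_square:
  "integral {tt k..tt (Suc k)} (\<lambda>x. hat_fall k x * hat_fall k x) = piece_square k"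
  using integral_reflect_midpoint[of "tt k" "tt (Suc k)" "\<lambda>x. hat_rise k x * hat_rise k x"]
  by (simp add: hat_fall_reflect piece_square_def)

lemma hat_fall_nonneg: "1 \<le> k \<Longrightarrow> k < n \<Longrightarrow> x \<in> {tt k..tt (Suc k)} \<Longrightarrow> 0 \<le> hat_fall k x"
  using hat_piece_nonneg[of k x k] by (simp add: hat_piece_def)

lemma hat_rise_nonneg: "1 \<le> k \<Longrightarrow> k < n \<Longrightarrow> x \<in> {tt k..tt (Suc k)} \<Longrightarrow> 0 \<le> hat_rise k x"
  using hat_piece_nonneg[of k x "Suc k"] by (simp add: hat_piece_def)

lemma piece_bounds:
  assumes "1 \<le> k" "k < n"
  shows "0 < piece_mass k" "piece_mass k \<le> 4 * (piece_square k - piece_overlap k)"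
    and "0 \<le> piece_overlap k"
proof -
  have tk: "tt k < tt (Suc k)" using nodes_increasing assms by simp
  show "0 < piece_mass k" "piece_mass k \<le> 4 * (piece_square k - piece_overlap k)"
    using ramp_integral_bounds[OF tk, of "\<xi> k"]
    by (simp_all add: piece_mass_def piece_square_def piece_overlap_def hat_fall_def hat_rise_def)
  have "continuous_on {tt k..tt (Suc k)} (\<lambda>x. hat_fall k x * hat_rise k x)"
    unfolding hat_fall_def hat_rise_def by (intro continuous_on_mult continuous_on_ramp)
  then show "0 \<le> piece_overlap k"
    unfolding piece_overlap_def
    using hat_fall_nonneg[OF assms] hat_rise_nonneg[OF assms]
    by (intro integral_nonneg integrable_continuous_interval) auto
qed

lemma hat_piece_eq_cases:
  "hat_piece j k = (if j = k then hat_fall k else if j = Suc k then hat_rise k else (\<lambda>_. 0))"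
  by (auto simp: fun_eq_iff hat_piece_def)

lemma integral_hat_piece:
  assumes "1 \<le> k"
  shows "integral {tt k..tt (Suc k)} (hat_piece j k)
    = (if k = j then piece_mass k else 0) + (if k = j - 1 then piece_mass k else 0)"
proof -
  consider "j = k" | "j = Suc k" | "j \<noteq> k" "j \<noteq> Suc k" by blast
  then show ?thesis
    by cases (use assms in \<open>auto simp: hat_piece_eq_cases integral_hat_fall piece_mass_def[symmetric]\<close>)
qed

lemma integral_hat_piece_square:
  assumes "1 \<le> k"
  shows "integral {tt k..tt (Suc k)} (\<lambda>x. hat_piece j k x * hat_piece j k x)
    = (if k = j then piece_square k else 0) + (if k = j - 1 then piece_square k else 0)"
proof -
  consider "j = k" | "j = Suc k" | "j \<noteq> k" "j \<noteq> Suc k" by blast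
  then show ?thesis
    by cases
      (use assms in \<open>auto simp: hat_piece_eq_cases integral_hat_fall_square piece_square_def[symmetric]\<close>)
qed

lemma integral_hat_piece_mult_next:
  "integral {tt k..tt (Suc k)} (\<lambda>x. hat_piece j k x * hat_piece (Suc j) k x)
    = (if k = j then piece_overlap k else 0)"
proof (cases "k = j")
  case False
  then have "(\<lambda>x. hat_piece j k x * hat_piece (Suc j) k x) = (\<lambda>_. 0)"
    by (auto simp: fun_eq_iff hat_piece_def)
  with False show ?thesis by simp
qed (simp add: hat_piece_def piece_overlap_def)

lemma hat_piece_mult_far: "Suc i < j \<Longrightarrow> hat_piece i k x * hat_piece j k x = 0"
  by (simp add: hat_piece_def)

lemma has_integral_hat_mult:
  assumes "i \<in> {1..n}" "j \<in> {1..n}"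
  shows "((\<lambda>x. hat n tt \<xi> i x * hat n tt \<xi> j x) has_integral
    (\<Sum>k=1..<n. integral {tt k..tt (Suc k)} (\<lambda>x. hat_piece i k x * hat_piece j k x))) {tt 1..tt n}"
  by (rule has_integral_by_pieces)
    (use assms in \<open>simp_all add: hat_eq_hat_piece continuous_on_mult continuous_on_hat_piece\<close>)

lemma has_integral_hat_mult_gram:
  assumes "i \<in> {1..n}" "j \<in> {1..n}"
  shows "((\<lambda>x. hat n tt \<xi> i x * hat n tt \<xi> j x) has_integral gram n tt \<xi> i j) {tt 1..tt n}"
  using has_integral_hat_mult[OF assms] by (simp add: gram_def integral_unique)

lemma gram_eq_sum_pieces:
  assumes "i \<in> {1..n}" "j \<in> {1..n}"
  shows "gram n tt \<xi> i j = (\<Sum>k=1..<n. integral {tt k..tt (Suc k)} (\<lambda>x. hat_piece i k x * hat_piece j k x))"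
  using has_integral_hat_mult[OF assms] by (simp add: gram_def integral_unique)

lemma gram_diag:
  assumes "j \<in> {1..n}"
  shows "gram n tt \<xi> j j = (if j < n then piece_square j else 0) + (if 2 \<le> j then piece_square (j - 1) else 0)"
proof -
  have "gram n tt \<xi> j j
      = (\<Sum>k=1..<n. (if k = j then piece_square k else 0) + (if k = j - 1 then piece_square k else 0))"
    unfolding gram_eq_sum_pieces[OF assms assms] by (intro sum.cong) (simp_all add: integral_hat_piece_square)
  also have "\<dots> = (if j < n then piece_square j else 0) + (if 2 \<le> j then piece_square (j - 1) else 0)"
    using assms by (auto simp: sum.distrib)
  finally show ?thesis .
qed

lemma gram_next:
  assumes "1 \<le> j" "j < n"
  shows "gram n tt \<xi> j (Suc j) = piece_overlap j"
  using assms by (simp add: gram_eq_sum_pieces integral_hat_piece_mult_next)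

lemma gram_far:
  assumes "Suc i < j" "i \<in> {1..n}" "j \<in> {1..n}"
  shows "gram n tt \<xi> i j = 0"
  unfolding gram_eq_sum_pieces[OF assms(2,3)] using assms(1) by (simp add: hat_piece_mult_far)

lemma has_integral_hat:
  assumes "j \<in> {1..n}"
  shows "(hat n tt \<xi> j has_integral
    (if j < n then piece_mass j else 0) + (if 2 \<le> j then piece_mass (j - 1) else 0)) {tt 1..tt n}"
proof -
  have "(hat n tt \<xi> j has_integral (\<Sum>k=1..<n. integral {tt k..tt (Suc k)} (hat_piece j k))) {tt 1..tt n}"
    by (rule has_integral_by_pieces) (use assms in \<open>simp_all add: hat_eq_hat_piece continuous_on_hat_piece\<close>)
  also have "(\<Sum>k=1..<n. integral {tt k..tt (Suc k)} (hat_piece j k))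
      = (\<Sum>k=1..<n. (if k = j then piece_mass k else 0) + (if k = j - 1 then piece_mass k else 0))"
    by (intro sum.cong) (simp_all add: integral_hat_piece)
  also have "\<dots> = (if j < n then piece_mass j else 0) + (if 2 \<le> j then piece_mass (j - 1) else 0)"
    using assms by (auto simp: sum.distrib)
  finally show ?thesis .
qed

lemma integrable_mult_hat:
  assumes "continuous_on {tt 1..tt n} f" "j \<in> {1..n}"
  shows "(\<lambda>x. f x * hat n tt \<xi> j x) integrable_on {tt 1..tt n}"
proof -
  have "continuous_on {tt k..tt (Suc k)} (\<lambda>x. f x * hat_piece j k x)" if "1 \<le> k" "k < n" for k
    using continuous_on_subset[OF assms(1) piece_subset[OF that]]
    by (intro continuous_on_mult continuous_on_hat_piece)
  then show ?thesis
    using has_integral_by_pieces[of "\<lambda>x. f x * hat n tt \<xi> j x" "\<lambda>k x. f x * hat_piece j k x"] assms(2)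
    by (auto simp: hat_eq_hat_piece integrable_on_def)
qed

lemma gram_off_diag_sum:
  assumes j: "j \<in> {1..n}"
  shows "(\<Sum>l\<in>{1..n} - {j}. \<bar>gram n tt \<xi> l j\<bar>)
    = (if j = 1 then 0 else \<bar>gram n tt \<xi> (j - 1) j\<bar>) + (if j = n then 0 else \<bar>gram n tt \<xi> j (Suc j)\<bar>)"
proof -
  have "\<bar>gram n tt \<xi> l j\<bar> = (if l = j - 1 then \<bar>gram n tt \<xi> (j - 1) j\<bar> else 0)
      + (if l = Suc j then \<bar>gram n tt \<xi> j (Suc j)\<bar> else 0)" if l: "l \<in> {1..n} - {j}" for l
  proof -
    consider "l = j - 1" | "l = Suc j" | "Suc l < j" | "Suc j < l" using l j by force
    then show ?thesis
    proof cases
      case 2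
      then show ?thesis using gram_sym[of n tt \<xi> "Suc j" j] by simp
    next
      case 3
      then show ?thesis using gram_far[of l j] l j by auto
    next
      case 4
      then show ?thesis using gram_far[of j l] gram_sym[of n tt \<xi> l j] l j by auto
    qed (use j in auto)
  qed
  then have "(\<Sum>l\<in>{1..n} - {j}. \<bar>gram n tt \<xi> l j\<bar>)
      = (\<Sum>l\<in>{1..n} - {j}. (if l = j - 1 then \<bar>gram n tt \<xi> (j - 1) j\<bar> else 0)
          + (if l = Suc j then \<bar>gram n tt \<xi> j (Suc j)\<bar> else 0))"
    by (intro sum.cong) auto
  also have "\<dots> = (if j = 1 then 0 else \<bar>gram n tt \<xi> (j - 1) j\<bar>) + (if j = n then 0 else \<bar>gram n tt \<xi> j (Suc j)\<bar>)"
    using j by (auto simp: sum.distrib)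
  finally show ?thesis .
qed

lemma piece_mass_le_gram_margin:
  assumes "1 \<le> k" "k < n"
  shows "piece_mass k \<le> 4 * (piece_square k - \<bar>gram n tt \<xi> k (Suc k)\<bar>)"
  using piece_bounds[OF assms] gram_next[OF assms] by simp

lemma hat_integral_le_gram_margin:
  assumes j: "j \<in> {1..n}"
  shows "0 < integral {tt 1..tt n} (hat n tt \<xi> j)
    \<and> integral {tt 1..tt n} (hat n tt \<xi> j) \<le> 4 * (\<bar>gram n tt \<xi> j j\<bar>
      - ((if j = 1 then 0 else \<bar>gram n tt \<xi> (j - 1) j\<bar>) + (if j = n then 0 else \<bar>gram n tt \<xi> j (Suc j)\<bar>)))"
proof -
  have hi: "0 < piece_mass j" "piece_mass j \<le> 4 * (piece_square j - \<bar>gram n tt \<xi> j (Suc j)\<bar>)"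
    if "j < n"
    using piece_bounds(1)[of j] piece_mass_le_gram_margin[of j] j that by auto
  have lo: "0 < piece_mass (j - 1)"
      "piece_mass (j - 1) \<le> 4 * (piece_square (j - 1) - \<bar>gram n tt \<xi> (j - 1) j\<bar>)"
    if "2 \<le> j"
    using piece_bounds(1)[of "j - 1"] piece_mass_le_gram_margin[of "j - 1"] j that by auto
  note hat_integral = integral_unique[OF has_integral_hat[OF j]]
  consider "j < n" "2 \<le> j" | "j = 1" "j < n" | "j = n" "2 \<le> j"
    using j two_le_n by force
  then show ?thesis
    by cases (use hi lo gram_diag[OF j] abs_ge_self[of "gram n tt \<xi> j j"] hat_integral in simp_all)
qed

lemma gram_row_diag_dominant: "row_diag_dominant n (gram n tt \<xi>)"
proof (rule row_diag_dominantI)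
  fix j assume "j \<in> {1..n}"
  from hat_integral_le_gram_margin[OF this, unfolded Suc_eq_plus1]
  show "(if j = 1 then 0 else \<bar>gram n tt \<xi> (j - 1) j\<bar>) + (if j = n then 0 else \<bar>gram n tt \<xi> j (j + 1)\<bar>)
      < \<bar>gram n tt \<xi> j j\<bar>"
    by argo
qed

lemma hat_coeff_bound:
  assumes rows: "\<And>j. j \<in> {1..n} \<Longrightarrow>
      \<bar>\<Sum>l=1..n. a l * gram n tt \<xi> l j\<bar> \<le> M * integral {tt 1..tt n} (hat n tt \<xi> j)"
    and l: "l \<in> {1..n}"
  shows "\<bar>a l\<bar> \<le> 4 * M"
proof (rule diag_dominant_coeff_bound[of "{1..n}" 4 "\<lambda>j. integral {tt 1..tt n} (hat n tt \<xi> j)"])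
  fix j assume j: "j \<in> {1..n}"
  show "0 < integral {tt 1..tt n} (hat n tt \<xi> j) \<and> integral {tt 1..tt n} (hat n tt \<xi> j)
      \<le> 4 * (\<bar>gram n tt \<xi> j j\<bar> - (\<Sum>l\<in>{1..n} - {j}. \<bar>gram n tt \<xi> l j\<bar>))"
    unfolding gram_off_diag_sum[OF j] by (rule hat_integral_le_gram_margin[OF j])
qed (use rows l in auto)

lemma gram_kernel_trivial:
  assumes "\<forall>j\<in>{1..n}. (\<Sum>l=1..n. a l * gram n tt \<xi> l j) = 0"
  shows "\<forall>l\<in>{1..n}. a l = 0"
  using hat_coeff_bound[of a 0] assms by auto

lemma abs_hat_combination_le:
  assumes a: "\<And>l. l \<in> {1..n} \<Longrightarrow> \<bar>a l\<bar> \<le> B" and x: "x \<in> {tt 1..tt n}"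
  shows "\<bar>\<Sum>l=1..n. a l * hat n tt \<xi> l x\<bar> \<le> B"
proof -
  obtain k where k: "1 \<le> k" "k < n" "x \<in> {tt k..tt (Suc k)}"
    using nodes_cover[OF x] .
  have "(\<Sum>l=1..n. a l * hat n tt \<xi> l x)
      = (\<Sum>l=1..n. (if l = k then a k * hat_fall k x else 0) + (if l = Suc k then a (Suc k) * hat_rise k x else 0))"
    using k by (intro sum.cong) (auto simp: hat_eq_hat_piece hat_piece_def)
  also have "\<dots> = a k * hat_fall k x + a (Suc k) * hat_rise k x"
    using k by (simp add: sum.distrib)
  finally have g: "(\<Sum>l=1..n. a l * hat n tt \<xi> l x) = a k * hat_fall k x + a (Suc k) * hat_rise k x" .
  have sum_le_1: "hat_fall k x + hat_rise k x \<le> 1"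
    using ramp_swap_add_ramp_le_1[of "tt k" "tt (Suc k)" x "\<xi> k"] nodes_increasing[of k] k
    by (simp add: hat_fall_def hat_rise_def)
  have nonneg: "0 \<le> hat_fall k x" "0 \<le> hat_rise k x"
    using hat_fall_nonneg hat_rise_nonneg k by auto
  have "\<bar>a k * hat_fall k x + a (Suc k) * hat_rise k x\<bar>
      \<le> \<bar>a k\<bar> * hat_fall k x + \<bar>a (Suc k)\<bar> * hat_rise k x"
    using abs_triangle_ineq[of "a k * hat_fall k x" "a (Suc k) * hat_rise k x"] nonneg
    by (simp add: abs_mult)
  also have "\<dots> \<le> B * hat_fall k x + B * hat_rise k x"
    using a k nonneg by (intro add_mono mult_right_mono) auto
  also have "\<dots> = B * (hat_fall k x + hat_rise k x)"
    by (simp add: distrib_left)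
  also have "\<dots> \<le> B"
    using a[of k] k sum_le_1 by (intro mult_left_le) auto
  finally show ?thesis
    unfolding g .
qed

lemma abs_integral_mult_hat_le:
  assumes f: "continuous_on {tt 1..tt n} f" and M: "\<And>x. x \<in> {tt 1..tt n} \<Longrightarrow> \<bar>f x\<bar> \<le> M"
    and j: "j \<in> {1..n}"
  shows "\<bar>integral {tt 1..tt n} (\<lambda>x. f x * hat n tt \<xi> j x)\<bar> \<le> M * integral {tt 1..tt n} (hat n tt \<xi> j)"
proof -
  have "((\<lambda>x. M * hat n tt \<xi> j x) has_integral M * integral {tt 1..tt n} (hat n tt \<xi> j)) {tt 1..tt n}"
    using has_integral_hat[OF j] by (intro has_integral_mult_right) (simp add: integral_unique)
  moreover have "norm (f x * hat n tt \<xi> j x) \<le> M * hat n tt \<xi> j x" if "x \<in> {tt 1..tt n}" for x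
    using M[OF that] hat_nonneg[OF that j] by (simp add: abs_mult mult_right_mono)
  ultimately show ?thesis
    using integral_norm_bound_integral[OF integrable_mult_hat[OF f j]] by (force simp: integral_unique)
qed

subsection \<open>The orthogonal projection\<close>

lemma integral_residual_mult_span:
  assumes f: "continuous_on {tt 1..tt n} f"
    and g: "\<And>x. g x = (\<Sum>l=1..n. a l * hat n tt \<xi> l x)"
    and h: "\<And>x. h x = (\<Sum>j=1..n. c j * hat n tt \<xi> j x)"
  shows "integral {tt 1..tt n} (\<lambda>x. (f x - g x) * h x) = (\<Sum>j=1..n. c j *
    (integral {tt 1..tt n} (\<lambda>x. f x * hat n tt \<xi> j x) - (\<Sum>l=1..n. a l * gram n tt \<xi> l j)))"
proof -
  let ?r = "\<lambda>j x. f x * hat n tt \<xi> j x - (\<Sum>l=1..n. a l * (hat n tt \<xi> l x * hat n tt \<xi> j x))"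
  have "(?r j has_integral integral {tt 1..tt n} (\<lambda>x. f x * hat n tt \<xi> j x)
      - (\<Sum>l=1..n. a l * gram n tt \<xi> l j)) {tt 1..tt n}" if j: "j \<in> {1..n}" for j
  proof (rule has_integral_diff)
    show "((\<lambda>x. f x * hat n tt \<xi> j x) has_integral integral {tt 1..tt n} (\<lambda>x. f x * hat n tt \<xi> j x))
        {tt 1..tt n}"
      using integrable_mult_hat[OF f j] by (rule integrable_integral)
    show "((\<lambda>x. \<Sum>l=1..n. a l * (hat n tt \<xi> l x * hat n tt \<xi> j x)) has_integral
        (\<Sum>l=1..n. a l * gram n tt \<xi> l j)) {tt 1..tt n}"
      using j by (intro has_integral_sum has_integral_mult_right has_integral_hat_mult_gram) auto
  qed
  then have "((\<lambda>x. \<Sum>j=1..n. c j * ?r j x) has_integral (\<Sum>j=1..n. c j *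
      (integral {tt 1..tt n} (\<lambda>x. f x * hat n tt \<xi> j x) - (\<Sum>l=1..n. a l * gram n tt \<xi> l j)))) {tt 1..tt n}"
    by (intro has_integral_sum has_integral_mult_right) auto
  moreover have "(f x - g x) * h x = (\<Sum>j=1..n. c j * ?r j x)" for x
  proof -
    have "(f x - g x) * h x = (\<Sum>j=1..n. c j * ((f x - g x) * hat n tt \<xi> j x))"
      by (simp add: h sum_distrib_left mult_ac)
    also have "\<dots> = (\<Sum>j=1..n. c j * ?r j x)"
      by (simp add: g left_diff_distrib sum_distrib_right mult.assoc)
    finally show ?thesis .
  qed
  ultimately show ?thesis
    by (simp add: integral_unique)
qed

lemma is_orth_proj_iff_normal_equations:
  assumes f: "continuous_on {tt 1..tt n} f" and g: "\<And>x. g x = (\<Sum>l=1..n. a l * hat n tt \<xi> l x)"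
  shows "is_orth_proj n tt \<xi> f g \<longleftrightarrow> (\<forall>j\<in>{1..n}.
    (\<Sum>l=1..n. a l * gram n tt \<xi> l j) = integral {tt 1..tt n} (\<lambda>x. f x * hat n tt \<xi> j x))"
proof
  assume proj: "is_orth_proj n tt \<xi> f g"
  show "\<forall>j\<in>{1..n}. (\<Sum>l=1..n. a l * gram n tt \<xi> l j) = integral {tt 1..tt n} (\<lambda>x. f x * hat n tt \<xi> j x)"
  proof
    fix j assume j: "j \<in> {1..n}"
    from proj hat_in_hat_span[OF j] have "integral {tt 1..tt n} (\<lambda>x. (f x - g x) * hat n tt \<xi> j x) = 0"
      unfolding is_orth_proj_def by blast
    moreover have "integral {tt 1..tt n} (\<lambda>x. (f x - g x) * hat n tt \<xi> j x)
        = integral {tt 1..tt n} (\<lambda>x. f x * hat n tt \<xi> j x) - (\<Sum>l=1..n. a l * gram n tt \<xi> l j)"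
      using integral_residual_mult_span[OF f g hat_eq_sum_indicator[OF j, where tt = tt and \<xi> = \<xi>]] j
      by (simp add: if_distrib[of "\<lambda>c. c * _"] cong: if_cong)
    ultimately show "(\<Sum>l=1..n. a l * gram n tt \<xi> l j) = integral {tt 1..tt n} (\<lambda>x. f x * hat n tt \<xi> j x)"
      by simp
  qed
next
  assume normal: "\<forall>j\<in>{1..n}.
    (\<Sum>l=1..n. a l * gram n tt \<xi> l j) = integral {tt 1..tt n} (\<lambda>x. f x * hat n tt \<xi> j x)"
  show "is_orth_proj n tt \<xi> f g"
    unfolding is_orth_proj_def
  proof (intro conjI ballI)
    show "g \<in> hat_span n tt \<xi>"
      using g unfolding hat_span_def by blast
    fix h assume "h \<in> hat_span n tt \<xi>"
    then obtain c where "\<And>x. h x = (\<Sum>j=1..n. c j * hat n tt \<xi> j x)"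
      unfolding hat_span_def by blast
    then show "integral {tt 1..tt n} (\<lambda>x. (f x - g x) * h x) = 0"
      using integral_residual_mult_span[OF f g] normal by simp
  qed
qed

lemma orth_proj_exists_unique:
  assumes f: "continuous_on {tt 1..tt n} f"
  shows "\<exists>g. is_orth_proj n tt \<xi> f g
    \<and> (\<forall>g'. is_orth_proj n tt \<xi> f g' \<longrightarrow> (\<forall>x\<in>{tt 1..tt n}. g' x = g x))"
proof -
  obtain a where a: "\<forall>j\<in>{1..n}.
      (\<Sum>l=1..n. a l * gram n tt \<xi> l j) = integral {tt 1..tt n} (\<lambda>x. f x * hat n tt \<xi> j x)"
  proof -
    have "\<exists>a. \<forall>j\<in>{1..n}.
        (\<Sum>l=1..n. a l * gram n tt \<xi> l j) = integral {tt 1..tt n} (\<lambda>x. f x * hat n tt \<xi> j x)"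
      by (rule square_system_solvable) (rule gram_kernel_trivial)
    with that show ?thesis by blast
  qed
  define g where "g x = (\<Sum>l=1..n. a l * hat n tt \<xi> l x)" for x
  have "is_orth_proj n tt \<xi> f g"
    using is_orth_proj_iff_normal_equations[OF f, of g a] a by (simp add: g_def)
  moreover have "g' x = g x" if proj': "is_orth_proj n tt \<xi> f g'" for g' x
  proof -
    obtain a' where a': "\<And>x. g' x = (\<Sum>l=1..n. a' l * hat n tt \<xi> l x)"
      using proj' unfolding is_orth_proj_def hat_span_def by blast
    with proj' a have "\<forall>j\<in>{1..n}. (\<Sum>l=1..n. (a' l - a l) * gram n tt \<xi> l j) = 0"
      using is_orth_proj_iff_normal_equations[OF f a'] by (simp add: left_diff_distrib sum_subtractf)
    then have "\<forall>l\<in>{1..n}. a' l - a l = 0"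
      by (rule gram_kernel_trivial)
    then show ?thesis
      unfolding a' g_def by (intro sum.cong) auto
  qed
  ultimately show ?thesis by blast
qed

lemma orth_proj_sup_le:
  assumes f: "continuous_on {tt 1..tt n} f" and proj: "is_orth_proj n tt \<xi> f g"
  shows "(SUP x\<in>{tt 1..tt n}. \<bar>g x\<bar>) \<le> 4 * (SUP x\<in>{tt 1..tt n}. \<bar>f x\<bar>)"
proof -
  let ?M = "SUP x\<in>{tt 1..tt n}. \<bar>f x\<bar>"
  have "bounded (f ` {tt 1..tt n})"
    by (intro compact_imp_bounded compact_continuous_image f compact_Icc)
  then have "bdd_above ((\<lambda>x. \<bar>f x\<bar>) ` {tt 1..tt n})"
    by (simp add: bdd_above_norm[symmetric] image_image)
  then have fM: "\<bar>f x\<bar> \<le> ?M" if "x \<in> {tt 1..tt n}" for x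
    using that by (intro cSUP_upper)
  obtain a where a: "\<And>x. g x = (\<Sum>l=1..n. a l * hat n tt \<xi> l x)"
    using proj unfolding is_orth_proj_def hat_span_def by blast
  have "\<bar>a l\<bar> \<le> 4 * ?M" if "l \<in> {1..n}" for l
  proof (rule hat_coeff_bound[OF _ that])
    fix j assume j: "j \<in> {1..n}"
    then show "\<bar>\<Sum>l=1..n. a l * gram n tt \<xi> l j\<bar> \<le> ?M * integral {tt 1..tt n} (hat n tt \<xi> j)"
      using is_orth_proj_iff_normal_equations[OF f a] proj abs_integral_mult_hat_le[OF f fM j] by simp
  qed
  then have "\<bar>g x\<bar> \<le> 4 * ?M" if "x \<in> {tt 1..tt n}" for x
    unfolding a using abs_hat_combination_le that by blast
  moreover have "{tt 1..tt n} \<noteq> {}"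
    using nodes_le[of 1 n] two_le_n by auto
  ultimately show ?thesis
    by (intro cSUP_least) auto
qed

end

theorem mainTheorem16:
  fixes n :: nat and tt \<xi> :: "nat \<Rightarrow> real"
  assumes "n \<ge> 3"
    and "\<And>i. 1 \<le> i \<Longrightarrow> i < n \<Longrightarrow> tt i < tt (i + 1)"
  shows "row_diag_dominant n (gram n tt \<xi>)
    \<and> (\<forall>f. continuous_on {tt 1..tt n} f \<longrightarrow>
          (\<exists>g. is_orth_proj n tt \<xi> f g
             \<and> (\<forall>g'. is_orth_proj n tt \<xi> f g' \<longrightarrow> (\<forall>x\<in>{tt 1..tt n}. g' x = g x)))
          \<and> (\<forall>g. is_orth_proj n tt \<xi> f g \<longrightarrow>
               (SUP x\<in>{tt 1..tt n}. \<bar>g x\<bar>) \<le> 4 * (SUP x\<in>{tt 1..tt n}. \<bar>f x\<bar>)))"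
proof -
  interpret hat_basis n tt \<xi>
    using assms by unfold_locales auto
  show ?thesis
    using gram_row_diag_dominant orth_proj_exists_unique orth_proj_sup_le by blast
qed

end
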